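(* Let $4.999\le r\le 5$, $1\le\theta\le 2.2$, and $\delta\in\mathbb{R}$. Define $u_0=u_1=1$, $u_2=\theta+\delta$, and $u_n=(r-\theta)u_{n-1}-(r-2\theta)u_{n-2}-\theta u_{n-3}$ for $n\ge 3$. Let $q(x)=1-(r-\theta)x+(r-2\theta)x^2+\theta x^3$ with discriminant $D=-27\theta^2-4\theta^3+6\theta^2r+6\theta r^2+\theta^2r^2-4r^3-2\theta r^3+r^4$. Suppose $D<0$, so that $q$ has one real root $\alpha$ and two non-real complex conjugate roots $\beta,\gamma$, and suppose $|\alpha|>1>|\beta|=|\gamma|>0$. Then $u_N\ge u_{N+1}$ for some integer $N>0$. *)

theory Defs
  imports "HOL-Analysis.Analysis" "HOL-Computational_Algebra.Polynomial"
begin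

fun useq :: "real \<Rightarrow> real \<Rightarrow> real \<Rightarrow> nat \<Rightarrow> real" where
  "useq r \<theta> \<delta> 0 = 1"
| "useq r \<theta> \<delta> (Suc 0) = 1"
| "useq r \<theta> \<delta> (Suc (Suc 0)) = \<theta> + \<delta>"
| "useq r \<theta> \<delta> (Suc (Suc (Suc n))) =
     (r - \<theta>) * useq r \<theta> \<delta> (Suc (Suc n)) - (r - 2*\<theta>) * useq r \<theta> \<delta> (Suc n)
     - \<theta> * useq r \<theta> \<delta> n"

definition qpoly :: "real \<Rightarrow> real \<Rightarrow> real poly" where
  "qpoly r \<theta> = [:1, -(r - \<theta>), r - 2*\<theta>, \<theta>:]"

definition qdisc :: "real \<Rightarrow> real \<Rightarrow> real" where
  "qdisc r \<theta> = -27*\<theta>^2 - 4*\<theta>^3 + 6*\<theta>^2*r + 6*\<theta>*r^2 + \<theta>^2*r^2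
     - 4*r^3 - 2*\<theta>*r^3 + r^4"

end

theory Submission
  imports Defs
begin

text \<open>
  The characteristic polynomial of the recurrence is \<open>x\<^sup>3 q(1/x)\<close>, so its roots are
  \<open>a = 1/\<alpha>\<close>, inside the unit disc, and a pair \<open>\<omega>, \<omega>\<^sup>*\<close> of non-real roots of modulus
  \<open>1/|\<beta>| > 1\<close>. Suppose the differences \<open>d n = u (n+1) - u n\<close> were positive for all \<open>n \<ge> 1\<close>.
  They satisfy the same recurrence, so \<open>d n = A a\<^sup>n + x n\<close> where \<open>x\<close> solves the second-order
  recurrence with characteristic roots \<open>\<omega>, \<omega>\<^sup>*\<close>; hence \<open>x\<close> is bounded below. But a
  non-trivial real solution of such a recurrence changes sign infinitely often while the
  quadratic form \<open>|x (n+1) - \<omega> x n|\<^sup>2\<close> grows like \<open>|\<omega>|\<^sup>2\<^sup>n\<close>; at a sign change from positive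
  to non-positive, the lower bound forces both terms to be small, a contradiction.
\<close>

lemma linrec2_not_eventually_pos:
  fixes x :: "nat \<Rightarrow> real"
  assumes rec: "\<And>n. x (n+2) = s * x (n+1) - P * x n"
    and disc: "s\<^sup>2 < 4 * P"
  shows "\<not> (\<forall>n\<ge>N. x n > 0)"
proof
  assume pos: "\<forall>n\<ge>N. x n > 0"
  define t where "t n = x (n+1) / x n" for n
  define \<mu> where "\<mu> = P - s\<^sup>2 / 4"
  have \<mu>_pos: "\<mu> > 0" using disc by (simp add: \<mu>_def)
  have t_pos: "t n > 0" if "n \<ge> N" for n
    using pos that by (simp add: t_def)
  text \<open>The ratio drops by at least \<open>\<mu> / t n\<close>, because \<open>t - (s - P/t) = ((t - s/2)\<^sup>2 + \<mu>) / t\<close>.\<close>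
  have t_step: "t (n+1) \<le> t n - \<mu> / t n" if "n \<ge> N" for n
  proof -
    have "x n > 0" "x (n+1) > 0"
      using pos that by auto
    have "t (n+1) = (s * x (n+1) - P * x n) / x (n+1)"
      using rec[of n] by (simp add: t_def)
    also have "\<dots> = s - P / t n"
      using \<open>x n > 0\<close> \<open>x (n+1) > 0\<close> by (simp add: t_def field_simps)
    also have "\<dots> = t n - ((t n - s/2)\<^sup>2 + \<mu>) / t n"
      using t_pos[OF that] by (simp add: \<mu>_def field_simps power2_eq_square)
    also have "\<dots> \<le> t n - \<mu> / t n"
      using t_pos[OF that] by (simp add: divide_right_mono)
    finally show ?thesis .
  qed
  define c where "c = \<mu> / t N"
  have c_pos: "c > 0"
    using \<mu>_pos t_pos[of N] by (simp add: c_def)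
  have t_decay: "t (N+k) \<le> t N - real k * c" for k
  proof (induction k)
    case 0
    then show ?case by simp
  next
    case (Suc k)
    have "real k * c \<ge> 0"
      using c_pos by simp
    then have "t (N+k) \<le> t N"
      using Suc by linarith
    then have "c \<le> \<mu> / t (N+k)"
      using t_pos[of "N+k"] \<mu>_pos by (simp add: c_def frac_le)
    moreover have "t (N + Suc k) \<le> t (N+k) - \<mu> / t (N+k)"
      using t_step[of "N+k"] by simp
    moreover have "real (Suc k) * c = real k * c + c"
      by (simp add: algebra_simps)
    ultimately show ?case
      using Suc by linarith
  qed
  obtain k where "t N < real k * c"
    using ex_less_of_nat_mult c_pos by blast
  then show False
    using t_decay[of k] t_pos[of "N+k"] by simp
qed

lemma exists_sign_change:
  fixes x :: "nat \<Rightarrow> real"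
  assumes "m \<le> n" "x m > 0" "x n \<le> 0"
  shows "\<exists>k\<ge>m. x k > 0 \<and> x (k+1) \<le> 0"
  using assms
proof (induction n rule: dec_induct)
  case base
  then show ?case by simp
next
  case (step n)
  then show ?case
    by (cases "x n \<le> 0") (auto intro: exI[of _ n])
qed

text \<open>The energy is \<open>|x (n+1) - \<omega> x n|\<^sup>2\<close> for a root \<open>\<omega>\<close> of \<open>X\<^sup>2 - s X + P\<close>; the recurrence
  multiplies \<open>x (n+1) - \<omega> x n\<close> by \<open>\<omega>\<^sup>*\<close>, hence the energy by \<open>P = |\<omega>|\<^sup>2\<close>.\<close>
definition linrec2_energy :: "real \<Rightarrow> real \<Rightarrow> (nat \<Rightarrow> real) \<Rightarrow> nat \<Rightarrow> real" where
  "linrec2_energy s P x n = (x (n+1))\<^sup>2 - s * x n * x (n+1) + P * (x n)\<^sup>2"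

lemma linrec2_energy_power:
  fixes x :: "nat \<Rightarrow> real"
  assumes rec: "\<And>n. x (n+2) = s * x (n+1) - P * x n"
  shows "linrec2_energy s P x n = P ^ n * linrec2_energy s P x 0"
proof (induction n)
  case 0
  then show ?case by simp
next
  case (Suc n)
  have rec_Suc: "x (Suc n + 1) = s * x (n+1) - P * x n"
    using rec[of n] by simp
  have "linrec2_energy s P x (Suc n) = P * linrec2_energy s P x n"
    unfolding linrec2_energy_def rec_Suc by (simp add: power2_eq_square algebra_simps)
  then show ?case
    using Suc by simp
qed

lemma linrec2_energy_pos:
  fixes x :: "nat \<Rightarrow> real"
  assumes disc: "s\<^sup>2 < 4 * P" and nz: "x n \<noteq> 0 \<or> x (n+1) \<noteq> 0"
  shows "linrec2_energy s P x n > 0"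
proof -
  have energy_eq: "linrec2_energy s P x n = (x (n+1) - s/2 * x n)\<^sup>2 + (P - s\<^sup>2/4) * (x n)\<^sup>2"
    by (simp add: linrec2_energy_def power2_eq_square algebra_simps)
  show ?thesis
  proof (cases "x n = 0")
    case True
    then show ?thesis using nz by (simp add: linrec2_energy_def)
  next
    case False
    then have "(P - s\<^sup>2/4) * (x n)\<^sup>2 > 0"
      using disc by simp
    moreover have "(x (n+1) - s/2 * x n)\<^sup>2 \<ge> 0"
      by simp
    ultimately show ?thesis
      unfolding energy_eq by linarith
  qed
qed

lemma linrec2_energy_le:
  fixes x :: "nat \<Rightarrow> real"
  assumes "\<bar>x n\<bar> \<le> M" "\<bar>x (n+1)\<bar> \<le> M" "P > 0"
  shows "linrec2_energy s P x n \<le> (1 + \<bar>s\<bar> + P) * M\<^sup>2"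
proof -
  have "(x (n+1))\<^sup>2 \<le> M\<^sup>2" "(x n)\<^sup>2 \<le> M\<^sup>2"
    using assms(1,2) by (metis abs_ge_zero power2_abs power_mono)+
  moreover have "- (s * x n * x (n+1)) \<le> \<bar>s\<bar> * M\<^sup>2"
  proof -
    have "- (s * x n * x (n+1)) \<le> \<bar>s * x n * x (n+1)\<bar>"
      by (rule abs_ge_minus_self)
    also have "\<dots> = \<bar>s\<bar> * (\<bar>x n\<bar> * \<bar>x (n+1)\<bar>)"
      by (simp add: abs_mult)
    also have "\<dots> \<le> \<bar>s\<bar> * M\<^sup>2"
      using assms(1,2) by (simp add: mult_left_mono mult_mono power2_eq_square)
    finally show ?thesis .
  qed
  moreover have "P * (x n)\<^sup>2 \<le> P * M\<^sup>2"
    using \<open>(x n)\<^sup>2 \<le> M\<^sup>2\<close> assms(3) by simp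
  moreover have "(1 + \<bar>s\<bar> + P) * M\<^sup>2 = M\<^sup>2 + \<bar>s\<bar> * M\<^sup>2 + P * M\<^sup>2"
    by (simp add: algebra_simps)
  ultimately show ?thesis
    unfolding linrec2_energy_def by linarith
qed

text \<open>A solution bounded below comes back close to zero infinitely often: just after it
  turns non-positive it is above \<open>-K\<close>, and the recurrence bounds the preceding positive term.\<close>
lemma linrec2_small_pairs:
  fixes x :: "nat \<Rightarrow> real"
  assumes rec: "\<And>n. x (n+2) = s * x (n+1) - P * x n"
    and disc: "s\<^sup>2 < 4 * P"
    and lower: "\<And>n. n \<ge> 1 \<Longrightarrow> x n \<ge> -K" and K: "K \<ge> 0"
  shows "\<exists>n\<ge>N. \<bar>x n\<bar> \<le> K + (\<bar>s\<bar> + 1) * K / P \<and> \<bar>x (n+1)\<bar> \<le> K + (\<bar>s\<bar> + 1) * K / P"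
    (is "\<exists>n\<ge>N. \<bar>x n\<bar> \<le> ?M \<and> \<bar>x (n+1)\<bar> \<le> ?M")
proof -
  have P_pos: "P > 0"
    using disc zero_le_power2[of s] by linarith
  have K_le_M: "K \<le> ?M"
    using K P_pos by simp
  show ?thesis
  proof (cases "\<forall>n\<ge>N + 1. x n \<le> 0")
    case True
    then show ?thesis
      using lower[of "N+1"] lower[of "N+2"] K_le_M by (intro exI[of _ "N+1"]) force
  next
    case False
    then obtain m where m: "m \<ge> N + 1" "x m > 0"
      by force
    obtain m' where "m' \<ge> m" "x m' \<le> 0"
      using linrec2_not_eventually_pos[OF rec disc, of m] by force
    then obtain n where n: "n \<ge> m" "x n > 0" "x (n+1) \<le> 0"
      using exists_sign_change m(2) by blast
    have lower_next: "x (n+1) \<ge> -K" "x (n+2) \<ge> -K"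
      using lower n(1) m(1) by auto
    have "P * x n = s * x (n+1) - x (n+2)"
      using rec[of n] by simp
    also have "\<dots> \<le> \<bar>s\<bar> * K + K"
    proof -
      have "s * x (n+1) \<le> \<bar>s\<bar> * \<bar>x (n+1)\<bar>"
        by (metis abs_ge_self abs_mult)
      also have "\<dots> \<le> \<bar>s\<bar> * K"
        using lower_next(1) n(3) by (intro mult_left_mono) auto
      finally show ?thesis
        using lower_next(2) by linarith
    qed
    finally have "x n \<le> (\<bar>s\<bar> + 1) * K / P"
      using P_pos by (simp add: pos_le_divide_eq algebra_simps)
    then show ?thesis
      using n m(1) lower_next(1) K K_le_M by (intro exI[of _ n]) auto
  qed
qed

lemma linrec2_unbounded_below:
  fixes x :: "nat \<Rightarrow> real"
  assumes rec: "\<And>n. x (n+2) = s * x (n+1) - P * x n"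
    and disc: "s\<^sup>2 < 4 * P" and P_gt_1: "P > 1"
    and nz: "x 0 \<noteq> 0 \<or> x 1 \<noteq> 0"
  shows "\<not> (\<forall>n\<ge>1. x n \<ge> -K)"
proof
  assume lower: "\<forall>n\<ge>1. x n \<ge> -K"
  define M where "M = \<bar>K\<bar> + (\<bar>s\<bar> + 1) * \<bar>K\<bar> / P"
  define B where "B = (1 + \<bar>s\<bar> + P) * M\<^sup>2"
  have E0: "linrec2_energy s P x 0 > 0"
    using linrec2_energy_pos[OF disc, of x 0] nz by simp
  obtain N where N: "B / linrec2_energy s P x 0 < P ^ N"
    using real_arch_pow[OF P_gt_1] by blast
  obtain n where n: "n \<ge> N" "\<bar>x n\<bar> \<le> M" "\<bar>x (n+1)\<bar> \<le> M"
    using linrec2_small_pairs[OF rec disc, of "\<bar>K\<bar>" N] lower unfolding M_def by force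
  have "B < P ^ N * linrec2_energy s P x 0"
    using N E0 by (simp add: divide_less_eq)
  also have "\<dots> \<le> P ^ n * linrec2_energy s P x 0"
    using E0 P_gt_1 n(1) by (intro mult_right_mono power_increasing) auto
  also have "\<dots> = linrec2_energy s P x n"
    by (rule linrec2_energy_power[OF rec, symmetric])
  also have "\<dots> \<le> B"
    unfolding B_def using n P_gt_1 by (intro linrec2_energy_le) auto
  finally show False by simp
qed

text \<open>The recurrence has characteristic polynomial \<open>(X - a) (X\<^sup>2 - s X + P)\<close>.\<close>
lemma linrec3_split:
  fixes y :: "nat \<Rightarrow> real"
  assumes rec: "\<And>n. y (n+3) = (a + s) * y (n+2) - (P + a * s) * y (n+1) + a * P * y n"
    and root: "a\<^sup>2 - s * a + P \<noteq> 0"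
  defines "A \<equiv> (y 2 - s * y 1 + P * y 0) / (a\<^sup>2 - s * a + P)"
  shows "y (n+2) - A * a ^ (n+2) = s * (y (n+1) - A * a ^ (n+1)) - P * (y n - A * a ^ n)"
proof -
  define f where "f n = y (n+2) - s * y (n+1) + P * y n" for n
  have f_power: "f n = a ^ n * f 0" for n
  proof (induction n)
    case 0
    then show ?case by simp
  next
    case (Suc n)
    have "f (Suc n) = a * f n"
      using rec[of n] by (simp add: f_def algebra_simps numeral_eq_Suc)
    then show ?case using Suc by simp
  qed
  have "f 0 = A * (a\<^sup>2 - s * a + P)"
    using root by (simp add: A_def f_def numeral_2_eq_2)
  then have "y (n+2) = a ^ n * A * (a\<^sup>2 - s * a + P) + s * y (n+1) - P * y n"
    using f_power[of n] by (simp add: f_def)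
  then show ?thesis
    by (simp add: power2_eq_square algebra_simps)
qed

lemma linrec3_not_pos:
  fixes y :: "nat \<Rightarrow> real"
  assumes rec: "\<And>n. y (n+3) = (a + s) * y (n+2) - (P + a * s) * y (n+1) + a * P * y n"
    and disc: "s\<^sup>2 < 4 * P" and P_gt_1: "P > 1" and a_le_1: "\<bar>a\<bar> \<le> 1"
    and y0: "y 0 = 0"
  shows "\<not> (\<forall>n\<ge>1. y n > 0)"
proof
  assume pos: "\<forall>n\<ge>1. y n > 0"
  have root: "a\<^sup>2 - s * a + P > 0"
  proof -
    have "a\<^sup>2 - s * a + P = (a - s/2)\<^sup>2 + (P - s\<^sup>2/4)"
      by (simp add: power2_eq_square algebra_simps)
    moreover have "P - s\<^sup>2/4 > 0"
      using disc by simp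
    moreover have "(a - s/2)\<^sup>2 \<ge> 0"
      by simp
    ultimately show ?thesis
      by linarith
  qed
  define A where "A = (y 2 - s * y 1 + P * y 0) / (a\<^sup>2 - s * a + P)"
  define x where "x n = y n - A * a ^ n" for n
  have x_rec: "x (n+2) = s * x (n+1) - P * x n" for n
    unfolding x_def A_def using linrec3_split[OF rec] root by simp
  have nz: "x 0 \<noteq> 0 \<or> x 1 \<noteq> 0"
    using pos y0 by (auto simp: x_def)
  have "x n \<ge> - \<bar>A\<bar>" if "n \<ge> 1" for n
  proof -
    have "\<bar>A * a ^ n\<bar> \<le> \<bar>A\<bar>"
      using a_le_1 by (simp add: abs_mult power_abs power_le_one mult_left_le)
    then show ?thesis
      using pos that abs_ge_self[of "A * a ^ n"] unfolding x_def by fastforce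
  qed
  then show False
    using linrec2_unbounded_below[OF x_rec disc P_gt_1 nz] by blast
qed

lemma useq_diff_rec:
  fixes r \<theta> \<delta> :: real
  defines "d \<equiv> \<lambda>n. useq r \<theta> \<delta> (n+1) - useq r \<theta> \<delta> n"
  shows "d (n+3) = (r - \<theta>) * d (n+2) - (r - 2*\<theta>) * d (n+1) - \<theta> * d n"
  by (simp add: d_def numeral_eq_Suc algebra_simps)

lemma real_quadratic_nonreal_root:
  fixes b c :: real and z :: complex
  assumes root: "z\<^sup>2 + of_real b * z + of_real c = 0" and nonreal: "Im z \<noteq> 0"
  shows "b = - 2 * Re z" "c = (cmod z)\<^sup>2"
proof -
  have "(2 * Re z + b) * Im z = 0"
    using arg_cong[OF root, of Im] by (simp add: power2_eq_square algebra_simps)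
  then show b: "b = - 2 * Re z"
    using nonreal by simp
  have "Re z * Re z - Im z * Im z + b * Re z + c = 0"
    using arg_cong[OF root, of Re] by (simp add: power2_eq_square)
  then show "c = (cmod z)\<^sup>2"
    unfolding cmod_power2 b by (simp add: power2_eq_square algebra_simps)
qed

lemma real_cubic_nonreal_root:
  fixes e2 e1 e0 a :: real and z :: complex
  assumes real_root: "a ^ 3 + e2 * a\<^sup>2 + e1 * a + e0 = 0"
    and root: "z ^ 3 + of_real e2 * z\<^sup>2 + of_real e1 * z + of_real e0 = 0"
    and nonreal: "Im z \<noteq> 0"
  shows "e2 = - (a + 2 * Re z)" "e1 = (cmod z)\<^sup>2 + a * (2 * Re z)" "e0 = - a * (cmod z)\<^sup>2"
proof -
  let ?g1 = "a + e2" and ?g0 = "a\<^sup>2 + e2 * a + e1"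
  have "(z - of_real a) * (z\<^sup>2 + of_real ?g1 * z + of_real ?g0)
      = (z ^ 3 + of_real e2 * z\<^sup>2 + of_real e1 * z + of_real e0)
        - of_real (a ^ 3 + e2 * a\<^sup>2 + e1 * a + e0)"
    by (simp add: power2_eq_square power3_eq_cube algebra_simps)
  moreover have "z \<noteq> of_real a"
    using nonreal by auto
  ultimately have "z\<^sup>2 + of_real ?g1 * z + of_real ?g0 = 0"
    using root real_root by simp
  from real_quadratic_nonreal_root[OF this nonreal]
  have g1: "?g1 = - 2 * Re z" and g0: "?g0 = (cmod z)\<^sup>2" .
  show e2: "e2 = - (a + 2 * Re z)"
    using g1 by simp
  show e1: "e1 = (cmod z)\<^sup>2 + a * (2 * Re z)"
    using g0 unfolding e2 by (simp add: power2_eq_square algebra_simps)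
  show "e0 = - a * (cmod z)\<^sup>2"
    using real_root unfolding e2 e1 by (simp add: power2_eq_square power3_eq_cube algebra_simps)
qed

lemma cubic_root_inverse:
  fixes x :: "'a::real_field"
  assumes "poly (map_poly of_real [:1, b, c, d:]) x = 0" "x \<noteq> 0"
  shows "inverse x ^ 3 + of_real b * (inverse x)\<^sup>2 + of_real c * inverse x + of_real d = 0"
proof -
  have "1 + of_real b * x + of_real c * x\<^sup>2 + of_real d * x ^ 3 = 0"
    using assms(1) by (simp add: map_poly_pCons algebra_simps power2_eq_square power3_eq_cube)
  then have "inverse x ^ 3 * (1 + of_real b * x + of_real c * x\<^sup>2 + of_real d * x ^ 3) = 0"
    by simp
  then show ?thesis
    using assms(2) by (simp add: field_simps power2_eq_square power3_eq_cube)
qed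

lemma useq_descent:
  fixes r \<theta> \<delta> a s P :: real
  assumes coeffs: "a + s = r - \<theta>" "P + a * s = r - 2*\<theta>" "a * P = - \<theta>"
    and disc: "s\<^sup>2 < 4 * P" and P_gt_1: "P > 1" and a_le_1: "\<bar>a\<bar> \<le> 1"
  shows "\<exists>N::nat. N > 0 \<and> useq r \<theta> \<delta> N \<ge> useq r \<theta> \<delta> (N + 1)"
proof (rule ccontr)
  assume no_descent: "\<not> ?thesis"
  define d where "d n = useq r \<theta> \<delta> (n+1) - useq r \<theta> \<delta> n" for n
  have "d n > 0" if "n \<ge> 1" for n
  proof -
    have "\<not> (n > 0 \<and> useq r \<theta> \<delta> n \<ge> useq r \<theta> \<delta> (n+1))"
      using no_descent by blast
    then show ?thesis
      using that by (simp add: d_def)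
  qed
  moreover have "d (n+3) = (a + s) * d (n+2) - (P + a * s) * d (n+1) + a * P * d n" for n
    unfolding coeffs d_def using useq_diff_rec[of r \<theta> \<delta> n] by simp
  moreover have "d 0 = 0"
    by (simp add: d_def)
  ultimately show False
    using linrec3_not_pos[of d a s P] disc P_gt_1 a_le_1 by blast
qed

text \<open>The characteristic polynomial \<open>X\<^sup>3 - (r - \<theta>) X\<^sup>2 + (r - 2\<theta>) X + \<theta>\<close> of the recurrence is
  the reciprocal of \<open>q\<close>; it factors as \<open>(X - a) (X\<^sup>2 - s X + P)\<close> with \<open>a = 1/\<alpha>\<close> and \<open>s, P\<close>
  the trace and norm of \<open>1/\<beta>\<close>.\<close>
lemma qpoly_roots_char_factorisation:
  fixes r \<theta> \<alpha> :: real and \<beta> :: complex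
  assumes \<alpha>_root: "poly (qpoly r \<theta>) \<alpha> = 0" and \<beta>_root: "poly (map_poly of_real (qpoly r \<theta>)) \<beta> = 0"
    and \<beta>_nonreal: "Im \<beta> \<noteq> 0" and "\<bar>\<alpha>\<bar> > 1" "cmod \<beta> < 1"
  obtains a s P where "a + s = r - \<theta>" "P + a * s = r - 2*\<theta>" "a * P = - \<theta>"
    and "s\<^sup>2 < 4 * P" "P > 1" "\<bar>a\<bar> \<le> 1"
proof
  define a where "a = inverse \<alpha>"
  define \<omega> where "\<omega> = inverse \<beta>"
  have \<beta>_nz: "\<beta> \<noteq> 0"
    using \<beta>_nonreal by auto
  have a_root: "a ^ 3 + (- (r - \<theta>)) * a\<^sup>2 + (r - 2*\<theta>) * a + \<theta> = 0"
    using cubic_root_inverse[of "- (r - \<theta>)" "r - 2*\<theta>" \<theta> \<alpha>] \<alpha>_root \<open>\<bar>\<alpha>\<bar> > 1\<close>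
    by (auto simp: a_def qpoly_def)
  have \<omega>_root: "\<omega> ^ 3 + of_real (- (r - \<theta>)) * \<omega>\<^sup>2 + of_real (r - 2*\<theta>) * \<omega> + of_real \<theta> = 0"
    using cubic_root_inverse[OF \<beta>_root[unfolded qpoly_def] \<beta>_nz] by (simp add: \<omega>_def)
  have \<omega>_nonreal: "Im \<omega> \<noteq> 0"
    using \<beta>_nonreal \<beta>_nz by (simp add: \<omega>_def complex_eq_iff)
  note vieta = real_cubic_nonreal_root[OF a_root \<omega>_root \<omega>_nonreal]
  show "a + 2 * Re \<omega> = r - \<theta>" "(cmod \<omega>)\<^sup>2 + a * (2 * Re \<omega>) = r - 2*\<theta>" "a * (cmod \<omega>)\<^sup>2 = - \<theta>"
    using vieta by simp_all
  have "(Im \<omega>)\<^sup>2 > 0"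
    using \<omega>_nonreal by simp
  then show "(2 * Re \<omega>)\<^sup>2 < 4 * (cmod \<omega>)\<^sup>2"
    unfolding cmod_power2 by (simp add: power_mult_distrib)
  have "cmod \<omega> > 1"
    using \<open>cmod \<beta> < 1\<close> \<beta>_nz by (simp add: \<omega>_def norm_inverse one_less_inverse)
  then show "(cmod \<omega>)\<^sup>2 > 1"
    by simp
  show "\<bar>a\<bar> \<le> 1"
    using \<open>\<bar>\<alpha>\<bar> > 1\<close> by (simp add: a_def inverse_le_1_iff)
qed

theorem mainTheorem13:
  fixes r \<theta> \<delta> \<alpha> :: real and \<beta> \<gamma> :: complex
  assumes "4.999 \<le> r" "r \<le> 5" "1 \<le> \<theta>" "\<theta> \<le> 2.2"
    and "qdisc r \<theta> < 0"
    and "poly (qpoly r \<theta>) \<alpha> = 0"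
    and "poly (map_poly complex_of_real (qpoly r \<theta>)) \<beta> = 0" "Im \<beta> \<noteq> 0"
    and "\<gamma> = cnj \<beta>"
    and "\<bar>\<alpha>\<bar> > 1" "1 > cmod \<beta>" "cmod \<beta> = cmod \<gamma>" "cmod \<gamma> > 0"
  shows "\<exists>N::nat. N > 0 \<and> useq r \<theta> \<delta> N \<ge> useq r \<theta> \<delta> (N + 1)"
proof -
  obtain a s P where "a + s = r - \<theta>" "P + a * s = r - 2*\<theta>" "a * P = - \<theta>"
    and "s\<^sup>2 < 4 * P" "P > 1" "\<bar>a\<bar> \<le> 1"
    using qpoly_roots_char_factorisation[OF assms(6,7,8,10,11)] by blast
  then show ?thesis
    by (rule useq_descent)
qed

end
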